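(* Let $(b,w)\in\mathbb{N}^2$ (where $\mathbb{N}=\{0,1,2,\dots\}$). Then there exists a partition $\lambda$ such that $(b(\lambda),w(\lambda))=(b,w)$ if and only if \[(b-w)^2\le b.\] Furthermore, the same statement holds if one restricts to partitions into distinct parts.
   Context: A partition is a finite nonincreasing sequence $\lambda=(\lambda_1,\lambda_2,\dots,\lambda_r)$ of positive integers (the empty sequence is the unique partition of $0$); set $\lambda_i=0$ for $i<1$ and $i>r$. A partition is into distinct parts if all $\lambda_i$ are distinct. Its Ferrers graph consists of unit squares, with row $i$ (rows indexed from $i=0$) containing $\lambda_{i+1}$ squares, left-justified, columns indexed from $0$. Colour the square in row $r$ and column $c$ black if $r+c$ is even and white if $r+c$ is odd (chess colouring, the corner square in row $0$, column $0$ being black). Then $b(\lambda)$ is the number of black squares and $w(\lambda)$ the number of white squares; explicitly $b(\lambda)=\sum_{j}\lceil \lambda_{2j+1}/2\rceil+\sum_j\lfloor \lambda_{2j}/2\rfloor$ and $w(\lambda)=\sum_{j}\lfloor \lambda_{2j+1}/2\rfloor+\sum_j\lceil \lambda_{2j}/2\rceil$. *)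

theory Defs
  imports Main
begin

text \<open>A partition is a finite nonincreasing list of positive integers.
  The list entry xs ! r (0-indexed) is lambda_(r+1), the length of row r of the Ferrers graph.\<close>
definition is_partition :: "nat list \<Rightarrow> bool" where
  "is_partition xs \<longleftrightarrow> sorted_wrt (\<ge>) xs \<and> (\<forall>x\<in>set xs. 0 < x)"

definition is_distinct_partition :: "nat list \<Rightarrow> bool" where
  "is_distinct_partition xs \<longleftrightarrow> is_partition xs \<and> distinct xs"

definition ferrers :: "nat list \<Rightarrow> (nat \<times> nat) set" where
  "ferrers xs = {(r, c). r < length xs \<and> c < xs ! r}"

definition black :: "nat list \<Rightarrow> nat" where
  "black xs = card {(r, c) \<in> ferrers xs. even (r + c)}"

definition white :: "nat list \<Rightarrow> nat" where
  "white xs = card {(r, c) \<in> ferrers xs. odd (r + c)}"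

end

theory Submission
  imports Defs
begin

(* Putting a row of length x on top of a Ferrers graph swaps the colours of all old squares,
   so the colour excess b - w becomes [x odd] - (b - w). Let n(d) = 2d - 1 for d > 0 and
   n(d) = -2d otherwise; the staircase (n(d), ..., 2, 1) has excess d. Following the recursion
   row by row, a partition of excess d has first part at least n(d) and hence size at least
   n(d)(n(d) + 1)/2 = d(2d - 1); as the size is b + w = 2b - d, this is d^2 <= b.
   Conversely the staircase of excess d has colours (d^2, d^2 - d), and lengthening its first
   row by 2m adds m squares of each colour. *)

lemma ferrers_Nil [simp]: "ferrers [] = {}"
  by (simp add: ferrers_def)

lemma ferrers_Cons:
  "ferrers (x # xs) = Pair 0 ` {..<x} \<union> apfst Suc ` ferrers xs"
  by (auto simp: ferrers_def nth_Cons image_iff split: nat.splits)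

lemma finite_ferrers [simp]: "finite (ferrers xs)"
  by (induction xs) (simp_all add: ferrers_Cons)

lemma card_even_less: "card {c::nat. c < x \<and> even c} = (x + 1) div 2"
  and card_odd_less: "card {c::nat. c < x \<and> odd c} = x div 2"
proof -
  have "card {c::nat. c < x \<and> even c} = (x + 1) div 2 \<and> card {c::nat. c < x \<and> odd c} = x div 2"
  proof (induction x)
    case (Suc x)
    have "{c. c < Suc x \<and> P c} = (if P x then insert x else id) {c. c < x \<and> P c}" for P
      by (auto simp: less_Suc_eq)
    with Suc show ?case by auto
  qed simp
  then show "card {c::nat. c < x \<and> even c} = (x + 1) div 2" "card {c::nat. c < x \<and> odd c} = x div 2"
    by simp_all
qed

lemma card_ferrers_Cons:
  assumes "\<And>c. P (Suc c) = (\<not> P c)"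
  shows "card {(r, c) \<in> ferrers (x # xs). P (r + c)}
    = card {c. c < x \<and> P c} + card {(r, c) \<in> ferrers xs. \<not> P (r + c)}"
proof -
  have split: "{(r, c) \<in> ferrers (x # xs). P (r + c)}
      = Pair 0 ` {c. c < x \<and> P c} \<union> apfst Suc ` {(r, c) \<in> ferrers xs. \<not> P (r + c)}"
    by (auto simp: ferrers_Cons assms)
  have "finite {(r, c) \<in> ferrers xs. \<not> P (r + c)}"
    by (rule finite_subset[OF _ finite_ferrers]) auto
  then show ?thesis
    unfolding split by (subst card_Un_disjoint) (auto simp: card_image inj_on_def)
qed

lemma black_Cons: "black (x # xs) = (x + 1) div 2 + white xs"
  using card_ferrers_Cons[of even x xs] by (simp add: black_def white_def card_even_less)

lemma white_Cons: "white (x # xs) = x div 2 + black xs"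
  using card_ferrers_Cons[of odd x xs] by (simp add: black_def white_def card_odd_less)

lemma black_Nil [simp]: "black [] = 0" and white_Nil [simp]: "white [] = 0"
  by (simp_all add: black_def white_def)

lemma black_add_white: "black xs + white xs = sum_list xs"
  by (induction xs) (simp_all add: black_Cons white_Cons)

definition colour_excess :: "nat list \<Rightarrow> int" where
  "colour_excess xs = int (black xs) - int (white xs)"

lemma colour_excess_Nil [simp]: "colour_excess [] = 0"
  by (simp add: colour_excess_def)

lemma colour_excess_Cons: "colour_excess (x # xs) = of_bool (odd x) - colour_excess xs"
  by (simp add: colour_excess_def black_Cons white_Cons)

fun stair :: "nat \<Rightarrow> nat list" where
  "stair 0 = []"
| "stair (Suc n) = Suc n # stair n"

lemma set_stair: "set (stair n) = {1..n}"
  by (induction n) (auto simp: atLeastAtMostSuc_conv)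

lemma sorted_stair: "sorted_wrt (>) (stair n)"
  by (induction n) (auto simp: set_stair)

lemma black_white_stair:
  "black (stair (2 * k)) = k^2 \<and> white (stair (2 * k)) = k^2 + k
    \<and> black (stair (2 * k + 1)) = (k + 1)^2 \<and> white (stair (2 * k + 1)) = k^2 + k"
  by (induction k) (simp_all add: black_Cons white_Cons power2_eq_square)

definition stair_index :: "int \<Rightarrow> nat" where
  "stair_index d = nat (if d > 0 then 2 * d - 1 else - 2 * d)"

lemma black_white_stair_index:
  "int (black (stair (stair_index d))) = d^2 \<and> int (white (stair (stair_index d))) = d^2 - d"
proof (cases "d > 0")
  case True
  define k where "k = nat (d - 1)"
  with True have "d = int k + 1"
    by simp
  moreover from this have "stair_index d = 2 * k + 1"
    by (simp add: stair_index_def nat_add_distrib)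
  ultimately show ?thesis
    using black_white_stair[of k] by (simp add: power2_eq_square algebra_simps)
next
  case False
  define k where "k = nat (- d)"
  with False have "d = - int k"
    by simp
  moreover from this have "stair_index d = 2 * k"
    by (simp add: stair_index_def nat_mult_distrib)
  ultimately show ?thesis
    using black_white_stair[of k] by (simp add: power2_eq_square algebra_simps)
qed

lemma stair_index_times_Suc: "int (stair_index d * (stair_index d + 1)) = 2 * d * (2 * d - 1)"
  by (simp add: stair_index_def algebra_simps)

(* The index can only increase when x and stair_index d have different parities, so then x > stair_index d. *)
lemma stair_index_Cons_le:
  assumes "stair_index d \<le> x"
  shows "stair_index (of_bool (odd x) - d) \<le> x"
    and "stair_index (of_bool (odd x) - d) \<le> stair_index d + 1"
  using assms unfolding stair_index_def by (auto simp: nat_le_iff split: if_splits) presburger+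

lemma square_step_le:
  fixes h k x :: nat
  assumes "k \<le> h + 1" "k \<le> x"
  shows "k * (k + 1) \<le> h * (h + 1) + 2 * x"
proof -
  have "(k - 1) * k \<le> h * (h + 1)"
    using assms by (intro mult_le_mono) auto
  moreover have "k * (k + 1) = (k - 1) * k + 2 * k"
    by (cases k) simp_all
  ultimately show ?thesis
    using assms by linarith
qed

definition first_part :: "nat list \<Rightarrow> nat" where
  "first_part xs = (case xs of [] \<Rightarrow> 0 | x # _ \<Rightarrow> x)"

lemma stair_index_colour_excess_le:
  assumes "sorted_wrt (\<ge>) xs"
  shows "stair_index (colour_excess xs) \<le> first_part xs
    \<and> stair_index (colour_excess xs) * (stair_index (colour_excess xs) + 1) \<le> 2 * sum_list xs"
  using assms
proof (induction xs)
  case (Cons x xs)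
  let ?h = "stair_index (colour_excess xs)" and ?k = "stair_index (colour_excess (x # xs))"
  have "first_part xs \<le> x"
    using Cons.prems by (cases xs) (simp_all add: first_part_def)
  with Cons have "?h \<le> x" "?h * (?h + 1) \<le> 2 * sum_list xs"
    by auto
  moreover from \<open>?h \<le> x\<close> have "?k \<le> x" "?k \<le> ?h + 1"
    unfolding colour_excess_Cons by (rule stair_index_Cons_le)+
  ultimately show ?case
    using square_step_le[of ?k ?h x] by (simp add: first_part_def)
qed (simp add: first_part_def stair_index_def)

lemma colour_excess_square_le_black:
  assumes "sorted_wrt (\<ge>) xs"
  shows "(colour_excess xs)^2 \<le> int (black xs)"
proof -
  let ?d = "colour_excess xs"
  have "2 * ?d * (2 * ?d - 1) \<le> 2 * int (sum_list xs)"
    using stair_index_colour_excess_le[OF assms] stair_index_times_Suc[of ?d] by linarith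
  moreover have "int (sum_list xs) = 2 * int (black xs) - ?d"
    by (simp flip: black_add_white add: colour_excess_def)
  ultimately show ?thesis
    by (simp add: colour_excess_def power2_eq_square algebra_simps)
qed

lemma is_distinct_partition_iff:
  "is_distinct_partition xs \<longleftrightarrow> sorted_wrt (>) xs \<and> (\<forall>x\<in>set xs. 0 < x)"
proof -
  have "sorted_wrt (>) xs \<longleftrightarrow> sorted_wrt (\<ge>) xs \<and> distinct xs"
    by (induction xs) (auto simp: order.strict_iff_order)
  then show ?thesis
    by (auto simp: is_distinct_partition_def is_partition_def)
qed

lemma black_white_Cons_add_double:
  "black ((x + 2 * m) # xs) = black (x # xs) + m \<and> white ((x + 2 * m) # xs) = white (x # xs) + m"
  by (simp add: black_Cons white_Cons)

lemma exists_distinct_partition_colours_stair_plus: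
  "\<exists>xs. is_distinct_partition xs \<and> black xs = black (stair n) + m \<and> white xs = white (stair n) + m"
proof (cases "m = 0")
  case True
  then show ?thesis
    using sorted_stair[of n] by (auto simp: is_distinct_partition_iff set_stair)
next
  case False
  \<comment> \<open>for n = 0 this is [2 * m], as 0 - 1 = 0; the case m = 0 is excluded because [0] is no partition\<close>
  let ?xs = "(n + 2 * m) # stair (n - 1)"
  have "is_distinct_partition ?xs"
    using sorted_stair[of "n - 1"] False by (auto simp: is_distinct_partition_iff set_stair)
  moreover have "black (n # stair (n - 1)) = black (stair n) \<and> white (n # stair (n - 1)) = white (stair n)"
    by (cases n) (simp_all add: black_Cons white_Cons)
  ultimately show ?thesis
    using black_white_Cons_add_double[of n m "stair (n - 1)"] by auto
qed

lemma exists_distinct_partition_colours: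
  assumes "(int b - int w)^2 \<le> int b"
  shows "\<exists>xs. is_distinct_partition xs \<and> black xs = b \<and> white xs = w"
proof -
  define d where "d = int b - int w"
  define m where "m = nat (int b - d^2)"
  have "int (black (stair (stair_index d)) + m) = int b" "int (white (stair (stair_index d)) + m) = int w"
    using black_white_stair_index[of d] assms by (simp_all add: m_def d_def)
  then show ?thesis
    using exists_distinct_partition_colours_stair_plus[of "stair_index d" m] by (simp only: of_nat_eq_iff)
qed

theorem theoremA:
  fixes b w :: nat
  shows "((\<exists>xs. is_partition xs \<and> black xs = b \<and> white xs = w)
            \<longleftrightarrow> (int b - int w)^2 \<le> int b)
       \<and> ((\<exists>xs. is_distinct_partition xs \<and> black xs = b \<and> white xs = w)
            \<longleftrightarrow> (int b - int w)^2 \<le> int b)"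
proof -
  have "(int b - int w)^2 \<le> int b" if "is_partition xs" "black xs = b" "white xs = w" for xs
    using that colour_excess_square_le_black[of xs] by (simp add: is_partition_def colour_excess_def)
  then show ?thesis
    using exists_distinct_partition_colours[of b w] by (auto simp: is_distinct_partition_def)
qed

end
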